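(* Let $f\in\mathbb{F}\langle X_1\rangle\otimes\cdots\otimes\mathbb{F}\langle X_k\rangle$ be computed by an ABP of size $s$ with $d$ layers. Let $\mathbf{v}=(v_1,\dots,v_{k-1})$ be a partial evaluation with $v_i:X_i\to\mathcal{M}_{t_i}(\mathbb{F})$, and let $T=t_1t_2\cdots t_{k-1}$, so that $\mathbf{v}(f)$ is a $T\times T$ matrix with entries in $\mathbb{F}\langle X_k\rangle$. Then for each $p,q\in[T]$, the $(p,q)$-th entry of $\mathbf{v}(f)$ can be computed by an ABP of size $sT$ with $d$ layers.
   Context: $\mathbb{F}$ is a field. Let $X_j=\{x_{1j},\dots,x_{nj}\}$, $j=1,\dots,k$, be mutually disjoint sets of variables, $\mathbb{F}\langle X_j\rangle$ the free noncommutative polynomial ring, and consider $\mathbb{F}\langle X_1\rangle\otimes\cdots\otimes\mathbb{F}\langle X_k\rangle$, where $1\otimes\cdots\otimes x_{ij}\otimes\cdots\otimes1$ plays the role of the variable $x_{ij}$. An algebraic branching program (ABP) is a layered directed acyclic graph with a source and a sink, edges only between consecutive layers, each edge labeled by an affine linear form in the variables; it computes the sum over source-to-sink paths of the ordered product of labels; its size is its number of nodes. A partial evaluation $\mathbf{v}=(v_1,\dots,v_{k-1})$ with $v_i:X_i\to A_i$ is extended to monomials $m_1\otimes\cdots\otimes m_k$ ($m_i\in X_i^*$) by $\mathbf{v}(m)=v_1(m_1)\otimes\cdots\otimes v_{k-1}(m_{k-1})\otimes m_k$ and by linearity; with $A_i=\mathcal{M}_{t_i}(\mathbb{F})$ the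 value lies in $\mathcal{M}_T(\mathbb{F})\otimes\mathbb{F}\langle X_k\rangle$, i.e. $T\times T$ matrices over $\mathbb{F}\langle X_k\rangle$ (via Kronecker products). *)

theory Defs
  imports Main "Jordan_Normal_Form.Matrix"
begin

text \<open>Elements of F<X_1> (x) ... (x) F<X_k>: a monomial m_1 (x) ... (x) m_k is a list of
  k words (component j is a word over variable indices i, meaning x_{i j}, 0-indexed);
  a polynomial is given by its coefficient function on monomials.\<close>
type_synonym 'a tpoly = "nat list list \<Rightarrow> 'a"

definition tone :: "nat \<Rightarrow> 'a::field tpoly" where
  "tone k m = (if m = replicate k [] then 1 else 0)"

definition tvar :: "nat \<Rightarrow> nat \<Rightarrow> nat \<Rightarrow> 'a::field tpoly" where
  "tvar k i j m = (if m = (replicate k [])[j := [i]] then 1 else 0)"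

definition tsplits :: "nat list list \<Rightarrow> (nat list list \<times> nat list list) set" where
  "tsplits m = {(u, w). length u = length m \<and> length w = length m \<and>
                        (\<forall>j<length m. u ! j @ w ! j = m ! j)}"

definition tmult :: "'a::field tpoly \<Rightarrow> 'a tpoly \<Rightarrow> 'a tpoly" where
  "tmult f g m = (\<Sum>(u, w)\<in>tsplits m. f u * g w)"

definition aff_poly :: "nat \<Rightarrow> nat \<Rightarrow> 'a::field \<Rightarrow> (nat \<Rightarrow> nat \<Rightarrow> 'a) \<Rightarrow> 'a tpoly" where
  "aff_poly n k c a m = c * tone k m + (\<Sum>i<n. \<Sum>j<k. a i j * tvar k i j m)"

text \<open>Layered ABP with d layers of nodes, layer l has w l nodes (numbered 0..<w l);
  the first and last layers consist of the source resp. sink only (node 0);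
  L l a b is the label (constant, coefficients) of the edge from node a of layer l to
  node b of layer l+1 (a missing edge = label 0).\<close>
definition is_abp :: "nat \<Rightarrow> (nat \<Rightarrow> nat) \<Rightarrow> bool" where
  "is_abp d w \<longleftrightarrow> d \<ge> 2 \<and> w 0 = 1 \<and> w (d - 1) = 1"

definition abp_size :: "nat \<Rightarrow> (nat \<Rightarrow> nat) \<Rightarrow> nat" where
  "abp_size d w = (\<Sum>l<d. w l)"

definition abp_paths :: "nat \<Rightarrow> (nat \<Rightarrow> nat) \<Rightarrow> nat list set" where
  "abp_paths d w = {ps. length ps = d \<and> ps ! 0 = 0 \<and> ps ! (d - 1) = 0 \<and> (\<forall>l<d. ps ! l < w l)}"

definition abp_poly :: "nat \<Rightarrow> nat \<Rightarrow> nat \<Rightarrow> (nat \<Rightarrow> nat) \<Rightarrow>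
    (nat \<Rightarrow> nat \<Rightarrow> nat \<Rightarrow> 'a::field \<times> (nat \<Rightarrow> nat \<Rightarrow> 'a)) \<Rightarrow> 'a tpoly" where
  "abp_poly n k d w L m =
     (\<Sum>ps\<in>abp_paths d w.
        foldr (\<lambda>l acc. tmult (case L l (ps ! l) (ps ! Suc l) of (c, a) \<Rightarrow> aff_poly n k c a) acc)
              [0..<d - 1] (tone k) m)"

text \<open>Partial evaluation: v i a is the t i x t i matrix assigned to x_{a i} (i < k-1).\<close>
definition wordmat :: "(nat \<Rightarrow> nat) \<Rightarrow> (nat \<Rightarrow> nat \<Rightarrow> 'a::field mat) \<Rightarrow> nat \<Rightarrow> nat list \<Rightarrow> 'a mat" where
  "wordmat t v i ws = foldr (\<lambda>a M. v i a * M) ws (1\<^sub>m (t i))"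

definition Tdim :: "(nat \<Rightarrow> nat) \<Rightarrow> nat \<Rightarrow> nat" where
  "Tdim t k = (\<Prod>i<k - 1. t i)"

text \<open>Index of factor i in row/column index p of the Kronecker product A_0 (x) ... (x) A_{k-2}.\<close>
definition kdigit :: "(nat \<Rightarrow> nat) \<Rightarrow> nat \<Rightarrow> nat \<Rightarrow> nat \<Rightarrow> nat" where
  "kdigit t k i p = (p div (\<Prod>j\<in>{Suc i..<k - 1}. t j)) mod t i"

text \<open>(p,q)-entry of v(f), an element of F<X_k>, represented as a one-factor tensor polynomial.\<close>
definition peval_entry :: "(nat \<Rightarrow> nat) \<Rightarrow> nat \<Rightarrow> (nat \<Rightarrow> nat \<Rightarrow> 'a::field mat) \<Rightarrow> 'a tpoly
    \<Rightarrow> nat \<Rightarrow> nat \<Rightarrow> 'a tpoly" where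
  "peval_entry t k v f p q m =
     (if length m = 1 then
        (\<Sum>mm\<in>{mm. f mm \<noteq> 0 \<and> length mm = k \<and> mm ! (k - 1) = m ! 0}.
           f mm * (\<Prod>i<k - 1. wordmat t v i (mm ! i) $$ (kdigit t k i p, kdigit t k i q)))
      else 0)"

end

(* Write E_pq(g) for the (p, q) entry of the partial evaluation of g.  Since the partial
   evaluation is a homomorphism into T x T matrices over F<X_k>, E_pq is linear and
   E_pq(g h) = sum_r E_pr(g) E_rq(h); it maps affine forms to affine forms in X_k.  Let g_a be the
   polynomial computed by the paths from node a to the sink, so g_a = sum_b label(a, b) g_b.  Then
   E_rq(g_a) = sum_b sum_r' E_rr'(label(a, b)) E_r'q(g_b), which is the same recursion for a program
   whose inner nodes are the pairs (a, r), with source (source, p) and sink (sink, q).  It has at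
   most s T nodes and the same number of layers. *)

theory Submission
  imports Defs "HOL-Library.Function_Algebras"
begin

section \<open>Mixed-radix digits\<close>

definition mixed_digit :: "(nat \<Rightarrow> nat) \<Rightarrow> nat \<Rightarrow> nat \<Rightarrow> nat \<Rightarrow> nat" where
  "mixed_digit t K i r = r div (\<Prod>j\<in>{Suc i..<K}. t j) mod t i"

lemma kdigit_eq_mixed_digit: "kdigit t k = mixed_digit t (k - 1)"
  by (simp add: fun_eq_iff kdigit_def mixed_digit_def)

lemma mixed_digit_less: "0 < t i \<Longrightarrow> mixed_digit t K i r < t i"
  by (simp add: mixed_digit_def)

lemma mixed_digit_Suc_last: "mixed_digit t (Suc K) K r = r mod t K"
  by (simp add: mixed_digit_def)

lemma mixed_digit_Suc: "i < K \<Longrightarrow> mixed_digit t (Suc K) i r = mixed_digit t K i (r div t K)"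
  by (simp add: mixed_digit_def prod.atLeastLessThan_Suc div_mult2_eq mult.commute[of _ "t K"])

lemma sum_lessThan_mult:
  fixes F :: "nat \<Rightarrow> 'b::comm_monoid_add"
  shows "(\<Sum>r<a * c. F r) = (\<Sum>x<a. \<Sum>b<c. F (x * c + b))"
proof -
  have "(\<Sum>r\<in>{x * c..<x * c + c}. F r) = (\<Sum>b<c. F (x * c + b))" for x
    by (simp add: sum.shift_bounds_nat_ivl[of F 0 "x * c" c, simplified] add.commute lessThan_atLeast0)
  then show ?thesis
    by (simp flip: sum.nat_group)
qed

lemma sum_prod_mixed_digits:
  fixes g :: "nat \<Rightarrow> nat \<Rightarrow> 'b::comm_semiring_1"
  shows "(\<Sum>r<(\<Prod>i<K. t i). \<Prod>i<K. g i (mixed_digit t K i r)) = (\<Prod>i<K. \<Sum>c<t i. g i c)"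
proof (induction K)
  case 0
  then show ?case by simp
next
  case (Suc K)
  show ?case
  proof (cases "t K = 0")
    case False
    have "(\<Sum>r<(\<Prod>i<Suc K. t i). \<Prod>i<Suc K. g i (mixed_digit t (Suc K) i r))
        = (\<Sum>x<(\<Prod>i<K. t i). \<Sum>b<t K. \<Prod>i<Suc K. g i (mixed_digit t (Suc K) i (x * t K + b)))"
      by (simp add: sum_lessThan_mult)
    also have "\<dots> = (\<Sum>x<(\<Prod>i<K. t i). \<Sum>b<t K. (\<Prod>i<K. g i (mixed_digit t K i x)) * g K b)"
      using False by (intro sum.cong refl) (simp add: mixed_digit_Suc mixed_digit_Suc_last)
    also have "\<dots> = (\<Prod>i<Suc K. \<Sum>c<t i. g i c)"
      by (simp add: Suc.IH flip: sum_product)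
    finally show ?thesis .
  qed simp
qed

lemma mixed_digits_inj:
  assumes "r < (\<Prod>i<K. t i)" "r' < (\<Prod>i<K. t i)"
    and "\<forall>i<K. mixed_digit t K i r = mixed_digit t K i r'"
  shows "r = r'"
  using assms
proof (induction K arbitrary: r r')
  case 0
  then show ?case by simp
next
  case (Suc K)
  have "r div t K < (\<Prod>i<K. t i)" "r' div t K < (\<Prod>i<K. t i)"
    using Suc.prems(1,2) by (simp_all add: less_mult_imp_div_less)
  moreover have "\<forall>i<K. mixed_digit t K i (r div t K) = mixed_digit t K i (r' div t K)"
    using Suc.prems(3) by (metis less_SucI mixed_digit_Suc)
  ultimately have "r div t K = r' div t K"
    by (rule Suc.IH)
  moreover have "r mod t K = r' mod t K"
    using Suc.prems(3) by (metis lessI mixed_digit_Suc_last)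
  ultimately show ?case
    by (metis div_mult_mod_eq)
qed

section \<open>Entries of Kronecker products of words\<close>

lemma Tdim_pos_factor: "0 < Tdim t k \<Longrightarrow> i < k - 1 \<Longrightarrow> 0 < t i"
  by (auto simp: Tdim_def)

lemma wordmat_Nil: "wordmat t v i [] = 1\<^sub>m (t i)"
  by (simp add: wordmat_def)

lemma wordmat_Cons: "wordmat t v i (a # ws) = v i a * wordmat t v i ws"
  by (simp add: wordmat_def)

lemma wordmat_carrier:
  assumes "\<forall>a<n. v i a \<in> carrier_mat (t i) (t i)" "set ws \<subseteq> {..<n}"
  shows "wordmat t v i ws \<in> carrier_mat (t i) (t i)"
  using assms(2)
  by (induction ws) (auto simp: wordmat_Nil wordmat_Cons assms(1) intro!: mult_carrier_mat[of _ "t i" "t i"])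

lemma wordmat_append:
  assumes "\<forall>a<n. v i a \<in> carrier_mat (t i) (t i)" "set ws \<subseteq> {..<n}" "set us \<subseteq> {..<n}"
  shows "wordmat t v i (ws @ us) = wordmat t v i ws * wordmat t v i us"
  using assms(2)
proof (induction ws)
  case Nil
  then show ?case
    using wordmat_carrier[of n v i t us] assms by (simp add: wordmat_Nil)
next
  case (Cons a ws)
  have "v i a \<in> carrier_mat (t i) (t i)" "wordmat t v i ws \<in> carrier_mat (t i) (t i)"
    "wordmat t v i us \<in> carrier_mat (t i) (t i)"
    using Cons.prems assms wordmat_carrier[of n v i t ws] wordmat_carrier[of n v i t us] by auto
  with Cons show ?case
    by (simp add: wordmat_Cons assoc_mult_mat[of _ "t i" "t i" _ "t i" _ "t i"])
qed

lemma index_mult_mat_sum: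
  fixes A B :: "'a::semiring_0 mat"
  assumes "A \<in> carrier_mat m l" "B \<in> carrier_mat l r" "i < m" "j < r"
  shows "(A * B) $$ (i, j) = (\<Sum>c<l. A $$ (i, c) * B $$ (c, j))"
  using assms by (auto simp: scalar_prod_def atLeast0LessThan intro!: sum.cong)

text \<open>The (p, q) entry of the Kronecker product v_0(u_0) (x) ... (x) v_{k-2}(u_{k-2}).\<close>
definition mono_entry :: "(nat \<Rightarrow> nat) \<Rightarrow> nat \<Rightarrow> (nat \<Rightarrow> nat \<Rightarrow> 'a::field mat) \<Rightarrow> nat list list
    \<Rightarrow> nat \<Rightarrow> nat \<Rightarrow> 'a" where
  "mono_entry t k v u p q = (\<Prod>i<k - 1. wordmat t v i (u ! i) $$ (kdigit t k i p, kdigit t k i q))"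

definition is_tmono :: "nat \<Rightarrow> nat \<Rightarrow> nat list list \<Rightarrow> bool" where
  "is_tmono n k u \<longleftrightarrow> length u = k \<and> (\<forall>j<k. set (u ! j) \<subseteq> {..<n})"

lemma is_tmono_append:
  "is_tmono n k u \<Longrightarrow> is_tmono n k w \<Longrightarrow> is_tmono n k (map2 (@) u w)"
  by (simp add: is_tmono_def)

text \<open>Multiplicativity of the Kronecker product, read on entries: the middle index runs over
  all tuples of mixed-radix digits.\<close>
lemma mono_entry_append:
  assumes carr: "\<forall>i<k - 1. \<forall>a<n. v i a \<in> carrier_mat (t i) (t i)"
    and T: "0 < Tdim t k" and u: "is_tmono n k u" and w: "is_tmono n k w"
  shows "(\<Sum>r<Tdim t k. mono_entry t k v u p r * mono_entry t k v w r q)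
       = mono_entry t k v (map2 (@) u w) p q"
proof -
  let ?W = "\<lambda>i ws. wordmat t v i ws" and ?dg = "mixed_digit t (k - 1)"
  let ?g = "\<lambda>i c. ?W i (u ! i) $$ (?dg i p, c) * ?W i (w ! i) $$ (c, ?dg i q)"
  have carrier: "?W i (u ! i) \<in> carrier_mat (t i) (t i)" "?W i (w ! i) \<in> carrier_mat (t i) (t i)"
    if "i < k - 1" for i
  proof -
    have "i < k" "set (u ! i) \<subseteq> {..<n}" "set (w ! i) \<subseteq> {..<n}"
      using that u w by (auto simp: is_tmono_def)
    then show "?W i (u ! i) \<in> carrier_mat (t i) (t i)" "?W i (w ! i) \<in> carrier_mat (t i) (t i)"
      using that carr by (auto intro!: wordmat_carrier[of n])
  qed
  have "mono_entry t k v (map2 (@) u w) p q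
      = (\<Prod>i<k - 1. (?W i (u ! i) * ?W i (w ! i)) $$ (?dg i p, ?dg i q))"
    unfolding mono_entry_def kdigit_eq_mixed_digit
  proof (intro prod.cong refl)
    fix i assume "i \<in> {..<k - 1}"
    with u w have "map2 (@) u w ! i = u ! i @ w ! i" "set (u ! i) \<subseteq> {..<n}" "set (w ! i) \<subseteq> {..<n}"
      by (auto simp: is_tmono_def)
    with carr \<open>i \<in> {..<k - 1}\<close> show "?W i (map2 (@) u w ! i) $$ (?dg i p, ?dg i q)
        = (?W i (u ! i) * ?W i (w ! i)) $$ (?dg i p, ?dg i q)"
      by (simp add: wordmat_append[of n])
  qed
  also have "\<dots> = (\<Prod>i<k - 1. \<Sum>c<t i. ?g i c)"
  proof (intro prod.cong refl)
    fix i assume "i \<in> {..<k - 1}"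
    then show "(?W i (u ! i) * ?W i (w ! i)) $$ (?dg i p, ?dg i q) = (\<Sum>c<t i. ?g i c)"
      using carrier[of i] Tdim_pos_factor[OF T, of i]
      by (intro index_mult_mat_sum[of _ "t i" "t i" _ "t i"]) (auto intro: mixed_digit_less)
  qed
  also have "\<dots> = (\<Sum>r<Tdim t k. \<Prod>i<k - 1. ?g i (?dg i r))"
    unfolding Tdim_def by (rule sum_prod_mixed_digits[symmetric])
  also have "\<dots> = (\<Sum>r<Tdim t k. mono_entry t k v u p r * mono_entry t k v w r q)"
    by (simp add: mono_entry_def kdigit_eq_mixed_digit prod.distrib)
  finally show ?thesis ..
qed

lemma mono_entry_Nil:
  assumes "0 < Tdim t k" "r < Tdim t k" "r' < Tdim t k"
  shows "mono_entry t k v (replicate k []) r r' = (if r = r' then 1 else 0)"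
proof -
  have "mono_entry t k v (replicate k []) r r'
      = (\<Prod>i<k - 1. if mixed_digit t (k - 1) i r = mixed_digit t (k - 1) i r' then 1 else 0)"
    unfolding mono_entry_def kdigit_eq_mixed_digit
    using Tdim_pos_factor[OF assms(1)] mixed_digit_less
    by (intro prod.cong refl) (simp add: wordmat_Nil)
  also have "\<dots> = (if r = r' then 1 else 0)"
    using mixed_digits_inj[where r = r and r' = r' and K = "k - 1" and t = t] assms(2,3)
    by (auto simp: Tdim_def)
  finally show ?thesis .
qed

section \<open>Tensor polynomials as sums of monomials\<close>

definition tsupp :: "'a::zero tpoly \<Rightarrow> nat list list set" where
  "tsupp g = {m. g m \<noteq> 0}"

definition tmon :: "nat list list \<Rightarrow> 'a::field tpoly" where
  "tmon u m = (if m = u then 1 else 0)"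

definition is_tpoly :: "nat \<Rightarrow> nat \<Rightarrow> 'a::field tpoly \<Rightarrow> bool" where
  "is_tpoly n k g \<longleftrightarrow> finite (tsupp g) \<and> (\<forall>u\<in>tsupp g. is_tmono n k u)"

lemma sum_fun_apply: "sum f A x = (\<Sum>a\<in>A. f a x)"
  by (induction A rule: infinite_finite_induct) auto

lemma tone_eq_tmon: "tone k = tmon (replicate k [])"
  by (simp add: fun_eq_iff tone_def tmon_def)

lemma tvar_eq_tmon: "tvar k i j = tmon ((replicate k [])[j := [i]])"
  by (simp add: fun_eq_iff tvar_def tmon_def)

lemma tsupp_tmon [simp]: "tsupp (tmon u) = {u}"
  by (simp add: tsupp_def tmon_def)

lemma tsupp_add:
  fixes g h :: "'a::field tpoly"
  shows "tsupp (\<lambda>m. g m + h m) \<subseteq> tsupp g \<union> tsupp h"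
  by (auto simp: tsupp_def)

lemma tsupp_scale:
  fixes g :: "'a::field tpoly"
  shows "tsupp (\<lambda>m. c * g m) \<subseteq> tsupp g"
  by (auto simp: tsupp_def)

lemma tsupp_sum:
  fixes g :: "'b \<Rightarrow> 'a::field tpoly"
  shows "tsupp (\<lambda>m. \<Sum>x\<in>A. g x m) \<subseteq> (\<Union>x\<in>A. tsupp (g x))"
proof
  fix m
  assume "m \<in> tsupp (\<lambda>m. \<Sum>x\<in>A. g x m)"
  then obtain x where "x \<in> A" "g x m \<noteq> 0"
    unfolding tsupp_def by (blast elim: sum.not_neutral_contains_not_neutral)
  then show "m \<in> (\<Union>x\<in>A. tsupp (g x))"
    by (auto simp: tsupp_def)
qed

lemma finite_tsupp_add [simp]:
  fixes g h :: "'a::field tpoly"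
  shows "finite (tsupp g) \<Longrightarrow> finite (tsupp h) \<Longrightarrow> finite (tsupp (\<lambda>m. g m + h m))"
  using tsupp_add[of g h] by (auto intro: finite_subset)

lemma finite_tsupp_scale [simp]:
  fixes g :: "'a::field tpoly"
  shows "finite (tsupp g) \<Longrightarrow> finite (tsupp (\<lambda>m. c * g m))"
  using tsupp_scale[of c g] by (auto intro: finite_subset)

lemma finite_tsupp_sum [simp]:
  fixes g :: "'b \<Rightarrow> 'a::field tpoly"
  shows "finite A \<Longrightarrow> (\<And>x. x \<in> A \<Longrightarrow> finite (tsupp (g x))) \<Longrightarrow> finite (tsupp (\<lambda>m. \<Sum>x\<in>A. g x m))"
  using tsupp_sum[of g A] by (auto intro: finite_subset)

lemma tpoly_eq_sum_tmon:
  assumes "finite S" "tsupp g \<subseteq> S"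
  shows "g = (\<lambda>m. \<Sum>u\<in>S. g u * tmon u m)"
proof
  fix m
  have "(\<Sum>u\<in>S. g u * tmon u m) = (\<Sum>u\<in>S. if m = u then g u else 0)"
    by (intro sum.cong) (auto simp: tmon_def)
  then show "g m = (\<Sum>u\<in>S. g u * tmon u m)"
    using assms by (cases "m \<in> S") (auto simp: sum.delta' tsupp_def)
qed

lemma tsplits_iff: "(u, w) \<in> tsplits m \<longleftrightarrow> length u = length w \<and> m = map2 (@) u w"
  by (auto simp: tsplits_def intro: nth_equalityI)

lemma finite_tsplits: "finite (tsplits m)"
proof -
  define C where "C = {x. set x \<subseteq> set (concat m) \<and> length x \<le> length (concat m)}"
  have part: "x \<in> C" "y \<in> C" if "x @ y \<in> set m" for x y
  proof -
    have "length (x @ y) \<in> set (map length m)"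
      using that by (metis image_eqI set_map)
    then have "length (x @ y) \<le> length (concat m)"
      by (simp add: length_concat member_le_sum_list del: length_append)
    then show "x \<in> C" "y \<in> C"
      using that by (auto simp: C_def)
  qed
  have "tsplits m \<subseteq> {u. set u \<subseteq> C \<and> length u = length m} \<times> {w. set w \<subseteq> C \<and> length w = length m}"
    by (auto simp: tsplits_def in_set_conv_nth intro: part) (metis nth_mem part)+
  moreover have "finite C"
    unfolding C_def by (rule finite_lists_length_le) simp
  ultimately show ?thesis
    using finite_lists_length_eq[of C "length m"] by (blast intro: finite_subset)
qed

lemma tmult_zero_right: "tmult f 0 = 0"
  by (simp add: fun_eq_iff tmult_def)

lemma tmult_add_right: "tmult f (g + h) = tmult f g + tmult f h"
  by (simp add: fun_eq_iff tmult_def sum.distrib distrib_left split_def)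

lemma tmult_scale:
  "tmult (\<lambda>m. c * f m) (\<lambda>m. e * g m) = (\<lambda>m. c * e * tmult f g m)"
  by (simp add: fun_eq_iff tmult_def split_def sum_distrib_left mult_ac)

lemma tmult_lincomb:
  "tmult (\<lambda>m. \<Sum>x\<in>A. c x * f x m) (\<lambda>m. \<Sum>y\<in>B. e y * g y m)
     = (\<lambda>m. \<Sum>x\<in>A. \<Sum>y\<in>B. c x * e y * tmult (f x) (g y) m)"
proof
  fix m
  have "tmult (\<lambda>m. \<Sum>x\<in>A. c x * f x m) (\<lambda>m. \<Sum>y\<in>B. e y * g y m) m
      = (\<Sum>z\<in>tsplits m. \<Sum>x\<in>A. \<Sum>y\<in>B. c x * e y * (f x (fst z) * g y (snd z)))"
    by (simp add: tmult_def split_def sum_product mult_ac)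
  also have "\<dots> = (\<Sum>x\<in>A. \<Sum>y\<in>B. c x * e y * tmult (f x) (g y) m)"
    by (simp add: tmult_def split_def sum_distrib_left sum.swap[of _ "tsplits m"])
  finally show "tmult (\<lambda>m. \<Sum>x\<in>A. c x * f x m) (\<lambda>m. \<Sum>y\<in>B. e y * g y m) m
      = (\<Sum>x\<in>A. \<Sum>y\<in>B. c x * e y * tmult (f x) (g y) m)" .
qed

lemma tmult_tmon:
  "tmult (tmon u) (tmon w) = (if length u = length w then tmon (map2 (@) u w) else 0)"
proof
  fix m
  have "tmult (tmon u) (tmon w) m = (\<Sum>z\<in>tsplits m. if z = (u, w) then 1 else 0)"
    unfolding tmult_def by (intro sum.cong refl) (auto simp: tmon_def split: if_splits)
  also have "\<dots> = (if length u = length w then tmon (map2 (@) u w) else 0) m"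
    by (auto simp: finite_tsplits tsplits_iff tmon_def)
  finally show "tmult (tmon u) (tmon w) m = (if length u = length w then tmon (map2 (@) u w) else 0) m" .
qed

lemma is_tpoly_zero: "is_tpoly n k 0"
  by (simp add: is_tpoly_def tsupp_def)

lemma is_tpoly_tmon: "is_tmono n k u \<Longrightarrow> is_tpoly n k (tmon u)"
  by (simp add: is_tpoly_def tsupp_tmon)

lemma is_tpoly_add: "is_tpoly n k g \<Longrightarrow> is_tpoly n k h \<Longrightarrow> is_tpoly n k (\<lambda>m. g m + h m)"
  using tsupp_add[of g h] by (auto simp: is_tpoly_def)

lemma is_tpoly_scale: "is_tpoly n k g \<Longrightarrow> is_tpoly n k (\<lambda>m. c * g m)"
  using tsupp_scale[of c g] by (auto simp: is_tpoly_def)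

lemma is_tpoly_sum:
  "finite A \<Longrightarrow> (\<And>x. x \<in> A \<Longrightarrow> is_tpoly n k (g x)) \<Longrightarrow> is_tpoly n k (\<lambda>m. \<Sum>x\<in>A. g x m)"
  using tsupp_sum[of g A] by (fastforce simp: is_tpoly_def)

lemma tmult_eq_sum_tmon:
  assumes g: "is_tpoly n k g" and h: "is_tpoly n k h"
  shows "tmult g h = (\<lambda>m. \<Sum>u\<in>tsupp g. g u * (\<Sum>w\<in>tsupp h. h w * tmon (map2 (@) u w) m))"
proof -
  have "tmult g h = tmult (\<lambda>m. \<Sum>u\<in>tsupp g. g u * tmon u m) (\<lambda>m. \<Sum>w\<in>tsupp h. h w * tmon w m)"
    using g h by (intro arg_cong2[where f = tmult] tpoly_eq_sum_tmon) (auto simp: is_tpoly_def)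
  also have "\<dots> = (\<lambda>m. \<Sum>u\<in>tsupp g. \<Sum>w\<in>tsupp h. g u * h w * tmult (tmon u) (tmon w) m)"
    by (rule tmult_lincomb)
  also have "\<dots> = (\<lambda>m. \<Sum>u\<in>tsupp g. g u * (\<Sum>w\<in>tsupp h. h w * tmon (map2 (@) u w) m))"
    using g h by (auto simp: is_tpoly_def is_tmono_def tmult_tmon sum_distrib_left mult.assoc
        intro!: sum.cong)
  finally show ?thesis .
qed

lemma is_tpoly_tmult:
  assumes "is_tpoly n k g" "is_tpoly n k h"
  shows "is_tpoly n k (tmult g h)"
  unfolding tmult_eq_sum_tmon[OF assms]
  using assms
  by (intro is_tpoly_sum is_tpoly_scale is_tpoly_tmon is_tmono_append) (auto simp: is_tpoly_def)

section \<open>Entries of the partial evaluation\<close>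

lemma peval_entry_tmon_apply:
  "peval_entry t k v (tmon u) p q m
     = (if length m = 1 \<and> length u = k \<and> u ! (k - 1) = m ! 0 then mono_entry t k v u p q else 0)"
proof -
  have "{mm. tmon u mm \<noteq> (0::'a) \<and> length mm = k \<and> mm ! (k - 1) = m ! 0}
      = (if length u = k \<and> u ! (k - 1) = m ! 0 then {u} else {})"
    by (auto simp: tmon_def)
  then show ?thesis
    by (simp add: peval_entry_def mono_entry_def tmon_def)
qed

lemma peval_entry_tmon:
  "peval_entry t k v (tmon u) p q
     = (\<lambda>m. if length u = k then mono_entry t k v u p q * tmon [u ! (k - 1)] m else 0)"
proof
  fix m
  have "m = [u ! (k - 1)] \<longleftrightarrow> length m = 1 \<and> u ! (k - 1) = m ! 0"
    by (cases m) auto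
  then show "peval_entry t k v (tmon u) p q m
      = (if length u = k then mono_entry t k v u p q * tmon [u ! (k - 1)] m else 0)"
    by (auto simp: peval_entry_tmon_apply tmon_def)
qed

text \<open>Finiteness is essential here and in the linearity lemmas below: peval_entry sums over the
  support, and a sum over an infinite set is 0.\<close>
lemma peval_entry_eq_sum_tmon:
  assumes "finite S" "tsupp g \<subseteq> S"
  shows "peval_entry t k v g p q = (\<lambda>m. \<Sum>u\<in>S. g u * peval_entry t k v (tmon u) p q m)"
proof
  fix m :: "nat list list"
  define P where "P u \<longleftrightarrow> length u = k \<and> u ! (k - 1) = m ! 0" for u
  show "peval_entry t k v g p q m = (\<Sum>u\<in>S. g u * peval_entry t k v (tmon u) p q m)"
  proof (cases "length m = 1")
    case True
    have "(\<Sum>u\<in>S. g u * peval_entry t k v (tmon u) p q m)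
        = (\<Sum>u\<in>{u \<in> S. P u}. g u * mono_entry t k v u p q)"
      using True assms(1) by (auto simp: sum.inter_filter peval_entry_tmon_apply P_def intro!: sum.cong)
    also have "\<dots> = (\<Sum>u\<in>{u. g u \<noteq> 0 \<and> P u}. g u * mono_entry t k v u p q)"
      using assms by (intro sum.mono_neutral_right) (auto simp: tsupp_def)
    finally show ?thesis
      using True by (simp add: peval_entry_def mono_entry_def P_def)
  qed (simp add: peval_entry_def peval_entry_tmon_apply)
qed

lemma peval_entry_add:
  assumes "finite (tsupp g)" "finite (tsupp h)"
  shows "peval_entry t k v (\<lambda>m. g m + h m) p q
     = (\<lambda>m. peval_entry t k v g p q m + peval_entry t k v h p q m)"
proof -
  have fin: "finite (tsupp g \<union> tsupp h)"
    using assms by simp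
  show ?thesis
    unfolding peval_entry_eq_sum_tmon[OF fin tsupp_add] peval_entry_eq_sum_tmon[OF fin Un_upper1]
      peval_entry_eq_sum_tmon[OF fin Un_upper2]
    by (simp add: sum.distrib distrib_right)
qed

lemma peval_entry_scale:
  assumes "finite (tsupp g)"
  shows "peval_entry t k v (\<lambda>m. c * g m) p q = (\<lambda>m. c * peval_entry t k v g p q m)"
  unfolding peval_entry_eq_sum_tmon[OF assms tsupp_scale] peval_entry_eq_sum_tmon[OF assms order.refl]
  by (simp add: sum_distrib_left mult.assoc)

lemma peval_entry_sum:
  assumes "finite A" "\<forall>x\<in>A. finite (tsupp (g x))"
  shows "peval_entry t k v (\<lambda>m. \<Sum>x\<in>A. g x m) p q = (\<lambda>m. \<Sum>x\<in>A. peval_entry t k v (g x) p q m)"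
proof -
  define S where "S = (\<Union>x\<in>A. tsupp (g x))"
  have S: "finite S" "\<And>x. x \<in> A \<Longrightarrow> tsupp (g x) \<subseteq> S"
    using assms by (auto simp: S_def)
  have "peval_entry t k v (\<lambda>m. \<Sum>x\<in>A. g x m) p q
      = (\<lambda>m. \<Sum>u\<in>S. (\<Sum>x\<in>A. g x u) * peval_entry t k v (tmon u) p q m)"
    using S(1) tsupp_sum[of g A] unfolding S_def by (rule peval_entry_eq_sum_tmon)
  also have "\<dots> = (\<lambda>m. \<Sum>x\<in>A. \<Sum>u\<in>S. g x u * peval_entry t k v (tmon u) p q m)"
    by (simp add: sum_distrib_right sum.swap[of _ S])
  also have "\<dots> = (\<lambda>m. \<Sum>x\<in>A. peval_entry t k v (g x) p q m)"
  proof (intro ext sum.cong refl)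
    fix m x
    assume "x \<in> A"
    show "(\<Sum>u\<in>S. g x u * peval_entry t k v (tmon u) p q m) = peval_entry t k v (g x) p q m"
      using peval_entry_eq_sum_tmon[OF S(1) S(2)[OF \<open>x \<in> A\<close>]] by simp
  qed
  finally show ?thesis .
qed

lemma peval_entry_tmon_append:
  assumes carr: "\<forall>i<k - 1. \<forall>a<n. v i a \<in> carrier_mat (t i) (t i)"
    and T: "0 < Tdim t k" and k: "1 \<le> k" and u: "is_tmono n k u" and w: "is_tmono n k w"
  shows "peval_entry t k v (tmon (map2 (@) u w)) p q
       = (\<Sum>r<Tdim t k. tmult (peval_entry t k v (tmon u) p r) (peval_entry t k v (tmon w) r q))"
proof -
  have len: "length u = k" "length w = k"
    using u w by (auto simp: is_tmono_def)
  then have last: "map2 (@) u w ! (k - 1) = u ! (k - 1) @ w ! (k - 1)"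
    using k by simp
  have "(\<Sum>r<Tdim t k. tmult (peval_entry t k v (tmon u) p r) (peval_entry t k v (tmon w) r q))
      = (\<Sum>r<Tdim t k. (\<lambda>m. mono_entry t k v u p r * mono_entry t k v w r q
            * tmon [u ! (k - 1) @ w ! (k - 1)] m))"
    by (simp add: peval_entry_tmon len tmult_scale tmult_tmon)
  also have "\<dots> = (\<lambda>m. (\<Sum>r<Tdim t k. mono_entry t k v u p r * mono_entry t k v w r q)
            * tmon [u ! (k - 1) @ w ! (k - 1)] m)"
    by (simp add: fun_eq_iff sum_fun_apply sum_distrib_right)
  also have "\<dots> = peval_entry t k v (tmon (map2 (@) u w)) p q"
    using len last by (simp add: mono_entry_append[OF carr T u w] peval_entry_tmon)
  finally show ?thesis ..
qed

text \<open>Both sides are bilinear in g and h, so this reduces to monomials.\<close>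
lemma peval_entry_tmult:
  assumes carr: "\<forall>i<k - 1. \<forall>a<n. v i a \<in> carrier_mat (t i) (t i)"
    and T: "0 < Tdim t k" and k: "1 \<le> k" and g: "is_tpoly n k g" and h: "is_tpoly n k h"
  shows "peval_entry t k v (tmult g h) p q
       = (\<Sum>r<Tdim t k. tmult (peval_entry t k v g p r) (peval_entry t k v h r q))"
proof -
  let ?E = "\<lambda>u p q. peval_entry t k v (tmon u) p q"
  have fin: "finite (tsupp g)" "finite (tsupp h)"
    using g h by (auto simp: is_tpoly_def)
  have append: "?E (map2 (@) u w) p q = (\<Sum>r<Tdim t k. tmult (?E u p r) (?E w r q))"
    if "u \<in> tsupp g" "w \<in> tsupp h" for u w
    using that g h by (intro peval_entry_tmon_append[OF carr T k]) (auto simp: is_tpoly_def)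
  have "peval_entry t k v (tmult g h) p q
      = (\<lambda>m. \<Sum>u\<in>tsupp g. g u * (\<Sum>w\<in>tsupp h. h w * ?E (map2 (@) u w) p q m))"
    unfolding tmult_eq_sum_tmon[OF g h] using fin by (simp add: peval_entry_sum peval_entry_scale)
  also have "\<dots> = (\<lambda>m. \<Sum>u\<in>tsupp g. g u * (\<Sum>w\<in>tsupp h. h w * (\<Sum>r<Tdim t k. tmult (?E u p r) (?E w r q)) m))"
    by (simp add: append)
  also have "\<dots> = (\<Sum>r<Tdim t k.
      tmult (\<lambda>m. \<Sum>u\<in>tsupp g. g u * ?E u p r m) (\<lambda>m. \<Sum>w\<in>tsupp h. h w * ?E w r q m))"
    by (simp add: tmult_lincomb fun_eq_iff sum_fun_apply sum_distrib_left mult.assoc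
        sum.swap[where B = "{..<Tdim t k}"])
  also have "\<dots> = (\<Sum>r<Tdim t k. tmult (peval_entry t k v g p r) (peval_entry t k v h r q))"
    unfolding peval_entry_eq_sum_tmon[OF fin(1) order.refl] peval_entry_eq_sum_tmon[OF fin(2) order.refl] ..
  finally show ?thesis .
qed

definition label_poly :: "nat \<Rightarrow> nat \<Rightarrow> 'a::field \<times> (nat \<Rightarrow> nat \<Rightarrow> 'a) \<Rightarrow> 'a tpoly" where
  "label_poly n k lab = (case lab of (c, a) \<Rightarrow> aff_poly n k c a)"

text \<open>The (r, r') entry of the partial evaluation of an affine form: the variables of the last
  block survive as the variables x_{i 0} of a one-block polynomial.\<close>
definition eval_label :: "(nat \<Rightarrow> nat) \<Rightarrow> nat \<Rightarrow> (nat \<Rightarrow> nat \<Rightarrow> 'a::field mat) \<Rightarrow> nat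
    \<Rightarrow> 'a \<times> (nat \<Rightarrow> nat \<Rightarrow> 'a) \<Rightarrow> nat \<Rightarrow> nat \<Rightarrow> 'a \<times> (nat \<Rightarrow> nat \<Rightarrow> 'a)" where
  "eval_label t k v n lab r r' = (case lab of (c, a) \<Rightarrow>
     (c * mono_entry t k v (replicate k []) r r'
        + (\<Sum>i<n. \<Sum>j<k - 1. a i j * mono_entry t k v ((replicate k [])[j := [i]]) r r'),
      \<lambda>i _. a i (k - 1) * mono_entry t k v ((replicate k [])[k - 1 := [i]]) r r'))"

lemma aff_poly_eq_tmon:
  "aff_poly n k c a
     = (\<lambda>m. c * tmon (replicate k []) m + (\<Sum>i<n. \<Sum>j<k. a i j * tmon ((replicate k [])[j := [i]]) m))"
  by (simp add: fun_eq_iff aff_poly_def tone_eq_tmon tvar_eq_tmon)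

lemma is_tpoly_label_poly: "is_tpoly n k (label_poly n k lab)"
proof -
  obtain c a where "lab = (c, a)"
    by fastforce
  moreover have "is_tmono n k ((replicate k [])[j := [i]])" if "i < n" "j < k" for i j
    using that by (auto simp: is_tmono_def nth_list_update)
  moreover have "is_tmono n k (replicate k [])"
    by (simp add: is_tmono_def)
  ultimately show ?thesis
    unfolding label_poly_def aff_poly_eq_tmon
    by (auto intro!: is_tpoly_add is_tpoly_scale is_tpoly_sum is_tpoly_tmon)
qed

lemma peval_entry_label_poly:
  assumes "1 \<le> k"
  shows "peval_entry t k v (label_poly n k lab) r r' = label_poly n 1 (eval_label t k v n lab r r')"
proof -
  obtain c a where lab: "lab = (c, a)"
    by fastforce
  let ?e = "\<lambda>i j. (replicate k [])[j := [i]]"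
  let ?E = "\<lambda>u. mono_entry t k v u r r'"
  have last: "?e i j ! (k - 1) = (if j = k - 1 then [i] else [])" if "j < k" for i j
    using that by (simp add: nth_list_update)
  have split_last: "{..<k} = insert (k - 1) {..<k - 1}"
    using assms by auto
  have inner: "(\<Sum>j<k. a i j * (?E (?e i j) * tmon [?e i j ! (k - 1)] m))
      = (\<Sum>j<k - 1. a i j * ?E (?e i j)) * tmon [[]] m + a i (k - 1) * ?E (?e i (k - 1)) * tmon [[i]] m"
    for i m
    using assms by (simp add: split_last last sum_distrib_right mult.assoc)
  have "peval_entry t k v (label_poly n k lab) r r'
      = (\<lambda>m. c * (?E (replicate k []) * tmon [[]] m)
           + (\<Sum>i<n. \<Sum>j<k. a i j * (?E (?e i j) * tmon [?e i j ! (k - 1)] m)))"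
    using assms by (simp add: lab label_poly_def aff_poly_eq_tmon peval_entry_add peval_entry_scale
        peval_entry_sum peval_entry_tmon)
  also have "\<dots> = label_poly n 1 (eval_label t k v n lab r r')"
    unfolding inner by (simp add: fun_eq_iff lab label_poly_def eval_label_def aff_poly_eq_tmon inner
        lessThan_Suc sum.distrib sum_distrib_left sum_distrib_right algebra_simps)
  finally show ?thesis .
qed

lemma peval_entry_tone:
  assumes "1 \<le> k" "r < Tdim t k" "r' < Tdim t k"
  shows "peval_entry t k v (tone k) r r' = (if r = r' then tone 1 else 0)"
  using assms mono_entry_Nil[of t k r r' v]
  by (auto simp: tone_eq_tmon peval_entry_tmon fun_eq_iff)

section \<open>Path sums of layered programs\<close>

function suffix_sum :: "nat \<Rightarrow> (nat \<Rightarrow> nat) \<Rightarrow> (nat \<Rightarrow> nat \<Rightarrow> nat \<Rightarrow> 'c \<Rightarrow> 'c) \<Rightarrow> 'c \<Rightarrow> nat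
    \<Rightarrow> nat \<Rightarrow> 'c::comm_monoid_add" where
  "suffix_sum d w F e l a =
     (if d - 1 \<le> l then (if a = 0 then e else 0)
      else (\<Sum>b<w (Suc l). F l a b (suffix_sum d w F e (Suc l) b)))"
  by pat_completeness auto
termination
  by (relation "measure (\<lambda>(d, w, F, e, l, a). d - l)") auto

declare suffix_sum.simps [simp del]

lemma suffix_sum_sink: "d - 1 \<le> l \<Longrightarrow> suffix_sum d w F e l a = (if a = 0 then e else 0)"
  by (subst suffix_sum.simps) simp

lemma suffix_sum_step:
  "l < d - 1 \<Longrightarrow> suffix_sum d w F e l a = (\<Sum>b<w (Suc l). F l a b (suffix_sum d w F e (Suc l) b))"
  by (subst suffix_sum.simps) simp

definition completions :: "nat \<Rightarrow> (nat \<Rightarrow> nat) \<Rightarrow> nat list \<Rightarrow> nat \<Rightarrow> nat list set" where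
  "completions d w pre a = {ps. length ps = d \<and> take (length pre) ps = pre \<and> ps ! length pre = a
      \<and> ps ! (d - 1) = 0 \<and> (\<forall>j\<in>{length pre..<d}. ps ! j < w j)}"

lemma finite_completions: "finite (completions d w pre a)"
proof -
  let ?N = "\<Sum>j<d. w j"
  have "x \<in> set pre \<union> {..<?N}" if ps: "ps \<in> completions d w pre a" and "x \<in> set ps" for ps x
  proof -
    obtain j where j: "j < d" "x = ps ! j"
      using ps \<open>x \<in> set ps\<close> by (auto simp: completions_def in_set_conv_nth)
    show ?thesis
    proof (cases "j < length pre")
      case True
      then have "x = pre ! j"
        using ps j by (auto simp: completions_def) (metis nth_take)
      with True show ?thesis
        by simp
    next
      case False
      then have "x < w j"
        using ps j by (auto simp: completions_def)
      also have "w j \<le> ?N"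
        using j by (intro member_le_sum) auto
      finally show ?thesis
        by simp
    qed
  qed
  then have "completions d w pre a \<subseteq> {ps. set ps \<subseteq> set pre \<union> {..<?N} \<and> length ps = d}"
    by (auto simp: completions_def)
  then show ?thesis
    by (rule finite_subset) (simp add: finite_lists_length_eq)
qed

lemma completions_sink:
  assumes "length pre = d - 1" "0 < d" "a < w (d - 1)"
  shows "completions d w pre a = (if a = 0 then {pre @ [0]} else {})"
proof (intro equalityI subsetI)
  fix ps
  assume ps: "ps \<in> completions d w pre a"
  then have len: "length ps = Suc (length pre)" and "a = 0"
    using assms by (auto simp: completions_def)
  have "ps = take (length pre) ps @ [ps ! length pre]"
    by (rule nth_equalityI) (auto simp: nth_append len less_Suc_eq)
  with ps \<open>a = 0\<close> show "ps \<in> (if a = 0 then {pre @ [0]} else {})"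
    by (auto simp: completions_def)
next
  fix ps
  assume "ps \<in> (if a = 0 then {pre @ [0]} else {})"
  moreover have "{length pre..<d} = {length pre}"
    using assms by auto
  ultimately show "ps \<in> completions d w pre a"
    using assms by (auto simp: completions_def nth_append split: if_splits)
qed

lemma completions_step:
  assumes "length pre < d - 1" "a < w (length pre)"
  shows "completions d w pre a = (\<Union>b<w (Suc (length pre)). completions d w (pre @ [a]) b)"
proof -
  let ?l = "length pre"
  have snoc: "take (Suc ?l) ps = pre @ [b] \<longleftrightarrow> take ?l ps = pre \<and> ps ! ?l = b"
    if "?l < length ps" for ps b
    using that by (simp add: take_Suc_conv_app_nth)
  have ivl: "{?l..<d} = insert ?l {Suc ?l..<d}"
    using assms(1) by auto
  show ?thesis
    using assms by (auto simp: completions_def snoc ivl)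
qed

lemma sum_completions_eq_suffix_sum:
  assumes F0: "\<And>l a b. F l a b 0 = 0"
    and Fadd: "\<And>l a b x y. F l a b (x + y) = F l a b x + F l a b y"
  shows "length pre < d \<Longrightarrow> a < w (length pre) \<Longrightarrow>
    (\<Sum>ps\<in>completions d w pre a. foldr (\<lambda>l. F l (ps ! l) (ps ! Suc l)) [length pre..<d - 1] e)
      = suffix_sum d w F e (length pre) a"
proof (induction "d - 1 - length pre" arbitrary: pre a)
  case 0
  then have "length pre = d - 1"
    by simp
  with 0 show ?case
    by (simp add: completions_sink suffix_sum_sink)
next
  case (Suc m)
  let ?l = "length pre"
  let ?P = "\<lambda>ps l. foldr (\<lambda>l. F l (ps ! l) (ps ! Suc l)) [l..<d - 1] e"
  have l: "?l < d - 1"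
    using Suc.hyps(2) by simp
  have F_sum: "F l a b (\<Sum>x\<in>A. g x) = (\<Sum>x\<in>A. F l a b (g x))" for l a b and g :: "nat list \<Rightarrow> 'a" and A
    using sum_comp_morphism[of "F l a b" g A, OF F0 Fadd] by (simp add: o_def)
  have P_step: "?P ps ?l = F ?l a b (?P ps (Suc ?l))" if "ps \<in> completions d w (pre @ [a]) b" for ps b
  proof -
    have "take (Suc ?l) ps ! ?l = a" "ps ! Suc ?l = b"
      using that by (auto simp: completions_def)
    then show ?thesis
      using l by (simp add: upt_conv_Cons)
  qed
  have "(\<Sum>ps\<in>completions d w pre a. ?P ps ?l)
      = (\<Sum>b<w (Suc ?l). \<Sum>ps\<in>completions d w (pre @ [a]) b. ?P ps ?l)"
    unfolding completions_step[where w = w and a = a, OF l Suc.prems(2)]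
  proof (rule sum.UNION_disjoint)
    show "\<forall>b\<in>{..<w (Suc ?l)}. finite (completions d w (pre @ [a]) b)"
      by (simp add: finite_completions)
  qed (auto simp: completions_def)
  also have "\<dots> = (\<Sum>b<w (Suc ?l). \<Sum>ps\<in>completions d w (pre @ [a]) b. F ?l a b (?P ps (Suc ?l)))"
    by (intro sum.cong refl P_step)
  also have "\<dots> = (\<Sum>b<w (Suc ?l). F ?l a b (\<Sum>ps\<in>completions d w (pre @ [a]) b. ?P ps (Suc ?l)))"
    by (simp add: F_sum)
  also have "\<dots> = (\<Sum>b<w (Suc ?l). F ?l a b (suffix_sum d w F e (Suc ?l) b))"
  proof (intro sum.cong refl)
    fix b
    assume "b \<in> {..<w (Suc ?l)}"
    then show "F ?l a b (\<Sum>ps\<in>completions d w (pre @ [a]) b. ?P ps (Suc ?l))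
        = F ?l a b (suffix_sum d w F e (Suc ?l) b)"
      using Suc.hyps(1)[of "pre @ [a]" b] Suc.hyps(2) l by simp
  qed
  also have "\<dots> = suffix_sum d w F e ?l a"
    using l by (simp add: suffix_sum_step)
  finally show ?case .
qed

definition abp_poly_from :: "nat \<Rightarrow> nat \<Rightarrow> nat \<Rightarrow> (nat \<Rightarrow> nat) \<Rightarrow>
    (nat \<Rightarrow> nat \<Rightarrow> nat \<Rightarrow> 'a::field \<times> (nat \<Rightarrow> nat \<Rightarrow> 'a)) \<Rightarrow> nat \<Rightarrow> nat \<Rightarrow> 'a tpoly" where
  "abp_poly_from n k d w L = suffix_sum d w (\<lambda>l a b. tmult (label_poly n k (L l a b))) (tone k)"

lemma abp_poly_eq_abp_poly_from:
  assumes "is_abp d w"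
  shows "abp_poly n k d w L = abp_poly_from n k d w L 0 0"
proof -
  have "abp_paths d w = completions d w [] 0"
    using assms by (auto simp: abp_paths_def completions_def is_abp_def)
  then have "abp_poly n k d w L = (\<Sum>ps\<in>completions d w [] 0.
      foldr (\<lambda>l. tmult (label_poly n k (L l (ps ! l) (ps ! Suc l)))) [0..<d - 1] (tone k))"
    by (simp add: fun_eq_iff abp_poly_def label_poly_def sum_fun_apply)
  also have "\<dots> = abp_poly_from n k d w L 0 0"
    unfolding abp_poly_from_def
    using sum_completions_eq_suffix_sum[of "\<lambda>l a b. tmult (label_poly n k (L l a b))" "[]" d 0 w] assms
    by (simp add: tmult_zero_right tmult_add_right is_abp_def)
  finally show ?thesis .
qed

lemma abp_poly_from_sink: "d - 1 \<le> l \<Longrightarrow> abp_poly_from n k d w L l a = (if a = 0 then tone k else 0)"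
  by (simp add: abp_poly_from_def suffix_sum_sink)

lemma abp_poly_from_step:
  "l < d - 1 \<Longrightarrow> abp_poly_from n k d w L l a
     = (\<Sum>b<w (Suc l). tmult (label_poly n k (L l a b)) (abp_poly_from n k d w L (Suc l) b))"
  by (simp add: abp_poly_from_def suffix_sum_step)

lemma is_tpoly_abp_poly_from: "l \<le> d - 1 \<Longrightarrow> is_tpoly n k (abp_poly_from n k d w L l a)"
proof (induction l arbitrary: a rule: inc_induct)
  case base
  show ?case
    by (simp add: abp_poly_from_sink is_tpoly_zero tone_eq_tmon is_tpoly_tmon is_tmono_def)
next
  case (step l)
  have "is_tpoly n k (\<lambda>m. \<Sum>b<w (Suc l). tmult (label_poly n k (L l a b)) (abp_poly_from n k d w L (Suc l) b) m)"
    using step.IH by (intro is_tpoly_sum is_tpoly_tmult is_tpoly_label_poly) auto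
  then show ?case
    using step.hyps by (simp add: abp_poly_from_step sum_fun_apply[abs_def])
qed

lemma peval_entry_abp_poly_from_step:
  assumes carr: "\<forall>i<k - 1. \<forall>a<n. v i a \<in> carrier_mat (t i) (t i)"
    and T: "0 < Tdim t k" and k: "1 \<le> k" and l: "l < d - 1"
  shows "peval_entry t k v (abp_poly_from n k d w L l a) r q
     = (\<Sum>b<w (Suc l). \<Sum>r'<Tdim t k.
          tmult (label_poly n 1 (eval_label t k v n (L l a b) r r'))
            (peval_entry t k v (abp_poly_from n k d w L (Suc l) b) r' q))"
proof -
  let ?R = "abp_poly_from n k d w L"
  have tpoly: "is_tpoly n k (?R (Suc l) b)" for b
    using l by (intro is_tpoly_abp_poly_from) simp
  have "finite (tsupp (tmult (label_poly n k (L l a b)) (?R (Suc l) b)))" for b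
    using is_tpoly_tmult[OF is_tpoly_label_poly tpoly[of b]] by (simp add: is_tpoly_def)
  then have "peval_entry t k v (?R l a) r q
      = (\<Sum>b<w (Suc l). peval_entry t k v (tmult (label_poly n k (L l a b)) (?R (Suc l) b)) r q)"
    using l by (simp add: abp_poly_from_step sum_fun_apply[abs_def] peval_entry_sum)
  also have "\<dots> = (\<Sum>b<w (Suc l). \<Sum>r'<Tdim t k.
          tmult (label_poly n 1 (eval_label t k v n (L l a b) r r')) (peval_entry t k v (?R (Suc l) b) r' q))"
    by (simp add: peval_entry_tmult[OF carr T k is_tpoly_label_poly tpoly] peval_entry_label_poly[OF k])
  finally show ?thesis .
qed

section \<open>The program computing one entry\<close>

definition entry_width :: "nat \<Rightarrow> nat \<Rightarrow> (nat \<Rightarrow> nat) \<Rightarrow> nat \<Rightarrow> nat" where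
  "entry_width T d w l = (if l = 0 \<or> l = d - 1 then 1 else w l * T)"

text \<open>Inner node x of the new program stands for the pair (x div T, x mod T) of an old node and
  a row index; the source and the sink carry the fixed indices p and q.\<close>
definition entry_node :: "nat \<Rightarrow> nat \<Rightarrow> nat \<Rightarrow> nat \<Rightarrow> nat \<Rightarrow> nat \<Rightarrow> nat \<times> nat" where
  "entry_node T d p q l x = (if l = 0 then (0, p) else if l = d - 1 then (0, q) else (x div T, x mod T))"

definition entry_labels :: "(nat \<Rightarrow> nat) \<Rightarrow> nat \<Rightarrow> (nat \<Rightarrow> nat \<Rightarrow> 'a::field mat) \<Rightarrow> nat \<Rightarrow> nat
    \<Rightarrow> nat \<Rightarrow> nat \<Rightarrow> (nat \<Rightarrow> nat \<Rightarrow> nat \<Rightarrow> 'a \<times> (nat \<Rightarrow> nat \<Rightarrow> 'a))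
    \<Rightarrow> nat \<Rightarrow> nat \<Rightarrow> nat \<Rightarrow> 'a \<times> (nat \<Rightarrow> nat \<Rightarrow> 'a)" where
  "entry_labels t k v n d p q L l x y =
     (case entry_node (Tdim t k) d p q l x of (a, r) \<Rightarrow>
        case entry_node (Tdim t k) d p q (Suc l) y of (b, r') \<Rightarrow> eval_label t k v n (L l a b) r r')"

lemma abp_size_entry_width:
  assumes "is_abp d w" "0 < T"
  shows "abp_size d (entry_width T d w) \<le> abp_size d w * T"
proof -
  have "entry_width T d w l \<le> w l * T" for l
    using assms by (auto simp: entry_width_def is_abp_def)
  then show ?thesis
    by (simp add: abp_size_def sum_distrib_right sum_mono)
qed

lemma sum_entry_nodes:
  assumes d: "is_abp d w" and q: "q < T" and l: "l < d - 1"
    and sink: "\<And>r'. Suc l = d - 1 \<Longrightarrow> r' < T \<Longrightarrow> r' \<noteq> q \<Longrightarrow> G 0 r' = 0"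
  shows "(\<Sum>y<entry_width T d w (Suc l). case entry_node T d p q (Suc l) y of (b, r') \<Rightarrow> G b r')
       = (\<Sum>b<w (Suc l). \<Sum>r'<T. G b r')"
proof (cases "Suc l = d - 1")
  case True
  have "(\<Sum>r'<T. G 0 r') = (\<Sum>r'\<in>{q}. G 0 r')"
    using q sink[OF True] by (intro sum.mono_neutral_right) auto
  moreover have "w (Suc l) = 1" "2 \<le> d"
    using True d by (simp_all add: is_abp_def)
  ultimately show ?thesis
    using True by (simp add: entry_width_def entry_node_def)
next
  case False
  moreover have "0 < T"
    using q by simp
  ultimately show ?thesis
    by (simp add: entry_width_def entry_node_def sum_lessThan_mult)
qed

lemma abp_poly_from_entry_labels:
  assumes carr: "\<forall>i<k - 1. \<forall>a<n. v i a \<in> carrier_mat (t i) (t i)"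
    and k: "1 \<le> k" and d: "is_abp d w" and q: "q < Tdim t k"
  shows "l \<le> d - 1 \<Longrightarrow> x < entry_width (Tdim t k) d w l \<Longrightarrow>
    abp_poly_from n 1 d (entry_width (Tdim t k) d w) (entry_labels t k v n d p q L) l x
      = (case entry_node (Tdim t k) d p q l x of (a, r) \<Rightarrow>
           peval_entry t k v (abp_poly_from n k d w L l a) r q)"
proof (induction l arbitrary: x rule: inc_induct)
  case base
  have "x = 0" "d - 1 \<noteq> 0"
    using base d by (auto simp: entry_width_def is_abp_def)
  then show ?case
    using k q by (simp add: abp_poly_from_sink entry_node_def peval_entry_tone)
next
  case (step l)
  let ?T = "Tdim t k"
  let ?w' = "entry_width ?T d w"
  let ?R = "abp_poly_from n k d w L" and ?R' = "abp_poly_from n 1 d ?w' (entry_labels t k v n d p q L)"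
  obtain a r where ar: "entry_node ?T d p q l x = (a, r)"
    by fastforce
  let ?G = "\<lambda>b r'. tmult (label_poly n 1 (eval_label t k v n (L l a b) r r'))
      (peval_entry t k v (?R (Suc l) b) r' q)"
  have T: "0 < ?T"
    using q by simp
  have "?R' l x = (\<Sum>y<?w' (Suc l). tmult (label_poly n 1 (entry_labels t k v n d p q L l x y)) (?R' (Suc l) y))"
    using step.hyps by (simp add: abp_poly_from_step)
  also have "\<dots> = (\<Sum>y<?w' (Suc l). case entry_node ?T d p q (Suc l) y of (b, r') \<Rightarrow> ?G b r')"
  proof (intro sum.cong refl)
    fix y
    assume "y \<in> {..<?w' (Suc l)}"
    then have "?R' (Suc l) y
        = (case entry_node ?T d p q (Suc l) y of (b, r') \<Rightarrow> peval_entry t k v (?R (Suc l) b) r' q)"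
      using step.IH by simp
    moreover have "entry_labels t k v n d p q L l x y
        = (case entry_node ?T d p q (Suc l) y of (b, r') \<Rightarrow> eval_label t k v n (L l a b) r r')"
      using ar by (simp add: entry_labels_def)
    ultimately show "tmult (label_poly n 1 (entry_labels t k v n d p q L l x y)) (?R' (Suc l) y)
        = (case entry_node ?T d p q (Suc l) y of (b, r') \<Rightarrow> ?G b r')"
      by (simp split: prod.split)
  qed
  also have "\<dots> = (\<Sum>b<w (Suc l). \<Sum>r'<?T. ?G b r')"
    using k q by (intro sum_entry_nodes[OF d q step.hyps(2)])
      (auto simp: abp_poly_from_sink peval_entry_tone tmult_zero_right)
  also have "\<dots> = peval_entry t k v (?R l a) r q"
    by (simp add: peval_entry_abp_poly_from_step[OF carr T k step.hyps(2)])
  finally show ?case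
    using ar by simp
qed

theorem lemma13:
  fixes f :: "'a::field tpoly"
    and L :: "nat \<Rightarrow> nat \<Rightarrow> nat \<Rightarrow> 'a \<times> (nat \<Rightarrow> nat \<Rightarrow> 'a)"
    and w t :: "nat \<Rightarrow> nat"
    and v :: "nat \<Rightarrow> nat \<Rightarrow> 'a mat"
    and n k d s p q :: nat
  assumes "k \<ge> 1"
    and "is_abp d w" and "abp_size d w = s" and "f = abp_poly n k d w L"
    and "\<forall>i<k - 1. \<forall>a<n. v i a \<in> carrier_mat (t i) (t i)"
    and "p < Tdim t k" and "q < Tdim t k"
  shows "\<exists>w' L'. is_abp d w' \<and> abp_size d w' \<le> s * Tdim t k \<and>
            abp_poly n 1 d w' L' = peval_entry t k v f p q"
proof -
  let ?T = "Tdim t k"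
  let ?w' = "entry_width ?T d w" and ?L' = "entry_labels t k v n d p q L"
  have T: "0 < ?T"
    using assms(6) by simp
  have "is_abp d ?w'"
    using assms(2) by (simp add: is_abp_def entry_width_def)
  moreover have "abp_size d ?w' \<le> s * ?T"
    using abp_size_entry_width[OF assms(2) T] assms(3) by simp
  moreover have "abp_poly n 1 d ?w' ?L' = peval_entry t k v f p q"
  proof -
    have "abp_poly n 1 d ?w' ?L' = abp_poly_from n 1 d ?w' ?L' 0 0"
      using \<open>is_abp d ?w'\<close> by (rule abp_poly_eq_abp_poly_from)
    also have "\<dots> = peval_entry t k v (abp_poly_from n k d w L 0 0) p q"
      using abp_poly_from_entry_labels[OF assms(5,1,2,7), of 0 0] by (simp add: entry_width_def entry_node_def)
    also have "\<dots> = peval_entry t k v f p q"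
      using assms(2,4) by (simp add: abp_poly_eq_abp_poly_from)
    finally show ?thesis .
  qed
  ultimately show ?thesis
    by blast
qed

end
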